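(* For $x\in[0,2^{10})$ write $\lfloor x\rfloor=\sum_{k=0}^{9}2^{9-k}e_k$ with $e_k\in\{0,1\}$ and $x=\lfloor x\rfloor+\sum_{k=0}^{\infty}s^k10^{-k-1}$ with $s^k\in\{0,\dots,9\}$, using the decimal expansion without an infinite tail of $9$'s. Define $g:[0,2^{10})\to[0,2^{10})$ by $$g(x)=\sum_{k=0}^{9}2^{9-k}\big(e_k+\delta(k,s^0)\bmod 2\big)+\sum_{k=0}^{\infty}s^{k+1}10^{-k-1},$$ where $\delta(k,j)=1$ if $k=j$ and $0$ otherwise. Let $I=\{n/10 : n\in\{0,1,\dots,2^{10}\cdot10\}\}$ and, for $x^0\in[0,2^{10})$, let $x^{n+1}=g(x^n)$ for $n\ge 0$. Let $\mathcal{L}=\{x^0\in[0,2^{10}) : x^n\notin I \text{ for all } n\in\mathbb{N}\}$. Then for every $x^0\in\mathcal{L}$, the Lyapunov exponent $$\lambda(x^0)=\lim_{n\to+\infty}\frac{1}{n}\sum_{i=1}^{n}\ln\left|g'(x^{i-1})\right|$$ exists and equals $\ln(10)$. *)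

theory Defs
  imports "HOL-Analysis.Analysis"
begin

definition bin_digit :: "real \<Rightarrow> nat \<Rightarrow> nat" where
  "bin_digit x k = (nat \<lfloor>x\<rfloor> div 2 ^ (9 - k)) mod 2"

text \<open>Decimal digits of the fractional part, the expansion without an infinite tail of 9s:
  x = floor x + sum_k s^k 10^(-k-1).\<close>
definition dec_digit :: "real \<Rightarrow> nat \<Rightarrow> nat" where
  "dec_digit x k = nat (\<lfloor>10 ^ (k + 1) * frac x\<rfloor> mod 10)"

definition delta :: "nat \<Rightarrow> nat \<Rightarrow> nat" where
  "delta k j = (if k = j then 1 else 0)"

definition gmap :: "real \<Rightarrow> real" where
  "gmap x = (\<Sum>k\<le>9. 2 ^ (9 - k) * real ((bin_digit x k + delta k (dec_digit x 0)) mod 2))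
            + (\<Sum>k. real (dec_digit x (k + 1)) * 10 powi (- int k - 1))"

definition Iset :: "real set" where
  "Iset = {real n / 10 | n. n \<le> 2 ^ 10 * 10}"

definition Lset :: "real set" where
  "Lset = {x0 \<in> {0..<2 ^ 10}. \<forall>n. (gmap ^^ n) x0 \<notin> Iset}"

end

theory Submission
  imports Defs
begin

text \<open>Writing \<open>m = \<lfloor>10 x\<rfloor>\<close>, the point \<open>x\<close> has integer part \<open>m div 10\<close> and first decimal
  digit \<open>m mod 10\<close>, so the integer part of \<open>g x\<close> depends on \<open>m\<close> alone, while its fractional part
  is the shifted decimal tail \<open>frac (10 x)\<close>. Hence \<open>g\<close> is affine with slope 10 on every open
  interval \<open>]m/10, (m+1)/10[\<close>, and \<open>g\<close> maps \<open>[0, 2^10)\<close> into itself. An orbit starting in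
  \<open>\<L>\<close> never meets the grid \<open>I\<close>, so \<open>g' = 10\<close> along it, and every Birkhoff average of
  \<open>ln |g'|\<close> is exactly \<open>ln 10\<close>.\<close>

lemma floor_mult_mod:
  fixes a :: real and b :: int
  assumes "b > 0"
  shows "\<lfloor>of_int b * a\<rfloor> mod b = \<lfloor>of_int b * a\<rfloor> - b * \<lfloor>a\<rfloor>"
proof -
  have "\<lfloor>of_int b * a\<rfloor> div b = \<lfloor>a\<rfloor>"
    using floor_divide_real_eq_div[of b "of_int b * a"] assms by simp
  then show ?thesis
    by (metis minus_div_mult_eq_mod mult.commute)
qed

lemma floor_power_mult_divide_tendsto:
  fixes b t :: real
  assumes "b > 1"
  shows "(\<lambda>n. \<lfloor>b ^ n * t\<rfloor> / b ^ n) \<longlonglongrightarrow> t"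
proof (rule tendsto_sandwich[of "\<lambda>n. t - 1 / b ^ n" _ _ "\<lambda>_. t"])
  have pos: "b ^ n > 0" for n
    using assms by simp
  show "\<forall>\<^sub>F n in sequentially. t - 1 / b ^ n \<le> \<lfloor>b ^ n * t\<rfloor> / b ^ n"
  proof (intro always_eventually allI)
    fix n
    have "(b ^ n * t - 1) / b ^ n \<le> \<lfloor>b ^ n * t\<rfloor> / b ^ n"
      using pos[of n] by (intro divide_right_mono) linarith+
    then show "t - 1 / b ^ n \<le> \<lfloor>b ^ n * t\<rfloor> / b ^ n"
      using pos[of n] assms by (simp add: diff_divide_distrib)
  qed
  show "\<forall>\<^sub>F n in sequentially. \<lfloor>b ^ n * t\<rfloor> / b ^ n \<le> t"
    using pos by (intro always_eventually allI) (simp add: divide_le_eq mult.commute)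
  have "(\<lambda>n. 1 / b ^ n) \<longlonglongrightarrow> 0"
    using assms by (intro LIMSEQ_divide_realpow_zero) auto
  then show "(\<lambda>n. t - 1 / b ^ n) \<longlonglongrightarrow> t"
    using tendsto_diff[OF tendsto_const, of _ 0 sequentially t] by simp
qed auto

lemma digit_expansion_sums:
  fixes t :: real and b :: int
  assumes "b > 1"
  shows "(\<lambda>k. of_int (\<lfloor>of_int b ^ (k + 1) * t\<rfloor> mod b) / of_int b ^ (k + 1)) sums frac t"
proof -
  define f where "f k = \<lfloor>of_int b ^ k * t\<rfloor> / of_int b ^ k" for k
  have "of_int (\<lfloor>of_int b ^ (k + 1) * t\<rfloor> mod b) / of_int b ^ (k + 1) = f (Suc k) - f k" for k
  proof -
    have "\<lfloor>of_int b ^ (k + 1) * t\<rfloor> mod b = \<lfloor>of_int b ^ (k + 1) * t\<rfloor> - b * \<lfloor>of_int b ^ k * t\<rfloor>"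
      using floor_mult_mod[of b "of_int b ^ k * t"] assms by (simp add: mult.assoc)
    then have "of_int (\<lfloor>of_int b ^ (k + 1) * t\<rfloor> mod b)
        = of_int \<lfloor>of_int b ^ (k + 1) * t\<rfloor> - of_int b * of_int \<lfloor>of_int b ^ k * t\<rfloor>"
      by (metis of_int_diff of_int_mult)
    moreover have "(F - of_int b * G) / of_int b ^ (k + 1) = F / of_int b ^ (k + 1) - G / of_int b ^ k"
      for F G :: real
      using assms by (simp add: field_simps)
    ultimately show ?thesis
      unfolding f_def Suc_eq_plus1 by metis
  qed
  then have "(\<lambda>n. \<Sum>k<n. of_int (\<lfloor>of_int b ^ (k + 1) * t\<rfloor> mod b) / of_int b ^ (k + 1))
      = (\<lambda>n. f n - \<lfloor>t\<rfloor>)"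
    by (simp only: sum_lessThan_telescope) (simp add: f_def)
  moreover have "(\<lambda>n. f n - \<lfloor>t\<rfloor>) \<longlonglongrightarrow> t - \<lfloor>t\<rfloor>"
    unfolding f_def using assms
    by (intro tendsto_diff floor_power_mult_divide_tendsto tendsto_const) simp
  ultimately show ?thesis
    by (simp add: sums_def frac_def)
qed

lemma dec_digit_0: "dec_digit x 0 = nat (\<lfloor>10 * x\<rfloor> mod 10)"
proof -
  have "\<lfloor>10 * frac x\<rfloor> = \<lfloor>10 * x\<rfloor> - 10 * \<lfloor>x\<rfloor>"
    using floor_diff_of_int[of "10 * x" "10 * \<lfloor>x\<rfloor>"] by (simp add: frac_def algebra_simps)
  moreover have "(\<lfloor>10 * x\<rfloor> - 10 * \<lfloor>x\<rfloor>) mod 10 = \<lfloor>10 * x\<rfloor> mod 10"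
    by presburger
  ultimately show ?thesis
    by (simp add: dec_digit_def)
qed

lemma bin_digit_eq: "bin_digit x k = nat (\<lfloor>10 * x\<rfloor> div 10) div 2 ^ (9 - k) mod 2"
  using floor_divide_real_eq_div[of 10 "10 * x"] by (simp add: bin_digit_def)

lemma dec_digit_tail_sums:
  "(\<lambda>k. real (dec_digit x (k + 1)) * 10 powi (- int k - 1)) sums frac (10 * x)"
proof -
  have digit: "real (dec_digit x k) = of_int (\<lfloor>10 ^ (k + 1) * frac x\<rfloor> mod 10)" for k
    by (simp add: dec_digit_def)
  define s where "s = (\<lambda>k. real (dec_digit x k) / 10 ^ (k + 1))"
  have "s sums frac x"
    using digit_expansion_sums[of 10 "frac x"] unfolding s_def digit by simp
  then have "(\<lambda>k. 10 * s (Suc k)) sums (10 * (frac x - s 0))"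
    by (intro sums_mult) (simp add: sums_Suc_iff)
  moreover have "10 * (frac x - s 0) = frac (10 * x)"
  proof -
    have "0 \<le> 10 * frac x" "10 * frac x < 10"
      using frac_lt_1[of x] by auto
    then have "real (dec_digit x 0) = \<lfloor>10 * frac x\<rfloor>"
      by (simp add: digit floor_less_iff)
    then have "10 * (frac x - s 0) = frac (10 * frac x)"
      by (simp add: s_def frac_def)
    also have "\<dots> = frac (10 * x + of_int (- 10 * \<lfloor>x\<rfloor>))"
      by (simp add: frac_def algebra_simps)
    also have "\<dots> = frac (10 * x)"
      by (rule frac_add_of_int_right)
    finally show ?thesis .
  qed
  moreover have "(\<lambda>k. real (dec_digit x (k + 1)) * 10 powi (- int k - 1)) = (\<lambda>k. 10 * s (Suc k))"
  proof
    fix k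
    have "(10::real) powi (- int k - 1) = 1 / 10 ^ (k + 1)"
      by (simp add: power_int_diff power_int_minus field_simps)
    then show "real (dec_digit x (k + 1)) * 10 powi (- int k - 1) = 10 * s (Suc k)"
      by (simp add: s_def)
  qed
  ultimately show ?thesis
    by simp
qed

text \<open>The integer part of \<open>g x\<close> as a function of \<open>m = \<lfloor>10 x\<rfloor>\<close>: the binary digits of
  \<open>m div 10\<close> with the one at position \<open>m mod 10\<close> flipped.\<close>
definition flipped_int_part :: "int \<Rightarrow> real" where
  "flipped_int_part m = (\<Sum>k\<le>9. 2 ^ (9 - k) *
     real ((nat (m div 10) div 2 ^ (9 - k) mod 2 + delta k (nat (m mod 10))) mod 2))"

lemma flipped_int_part_bounds: "0 \<le> flipped_int_part m" "flipped_int_part m \<le> 1023"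
proof -
  show "0 \<le> flipped_int_part m"
    unfolding flipped_int_part_def by (intro sum_nonneg) simp
  have "flipped_int_part m \<le> (\<Sum>k\<le>9. 2 ^ (9 - k) * (1::real))"
    unfolding flipped_int_part_def by (intro sum_mono mult_left_mono) auto
  also have "\<dots> = 1023"
    by (simp add: numeral_eq_Suc atMost_Suc)
  finally show "flipped_int_part m \<le> 1023" .
qed

lemma gmap_eq: "gmap x = flipped_int_part \<lfloor>10 * x\<rfloor> + frac (10 * x)"
  unfolding gmap_def flipped_int_part_def bin_digit_eq dec_digit_0
  using sums_unique[OF dec_digit_tail_sums] by simp

lemma gmap_in_range: "gmap x \<in> {0..<2 ^ 10}"
  using flipped_int_part_bounds[of "\<lfloor>10 * x\<rfloor>"] frac_lt_1[of "10 * x"]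
  by (simp add: gmap_eq add_nonneg_nonneg)

lemma gmap_has_derivative:
  assumes "10 * x \<notin> \<int>"
  shows "(gmap has_field_derivative 10) (at x)"
proof -
  define m where "m = \<lfloor>10 * x\<rfloor>"
  define S where "S = {of_int m / 10 <..< (of_int m + 1) / (10::real)}"
  have "of_int m \<noteq> 10 * x"
    using assms Ints_of_int by metis
  then have "of_int m < 10 * x" "10 * x < of_int m + 1"
    unfolding m_def by linarith+
  then have "x \<in> S"
    unfolding S_def by (simp add: field_simps)
  have affine: "flipped_int_part m + (10 * y - m) = gmap y" if "y \<in> S" for y
  proof -
    have "\<lfloor>10 * y\<rfloor> = m"
      using that unfolding S_def by (intro floor_unique) (auto simp: field_simps)
    then show ?thesis
      by (simp add: gmap_eq frac_def)
  qed
  have "((\<lambda>y. flipped_int_part m + (10 * y - m)) has_field_derivative 10) (at x)"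
    by (auto intro!: derivative_eq_intros)
  then show ?thesis
    by (rule has_field_derivative_transform_within_open[OF _ _ \<open>x \<in> S\<close>])
      (auto simp: S_def affine)
qed

lemma in_Iset_if_mult_10_in_Ints:
  assumes "x \<in> {0..<2 ^ 10}" "10 * x \<in> \<int>"
  shows "x \<in> Iset"
proof -
  obtain m where m: "10 * x = of_int m"
    using assms(2) Ints_cases by blast
  then have "0 \<le> m" "m \<le> 10240"
    using assms(1) by auto
  then have "x = real (nat m) / 10" "nat m \<le> 2 ^ 10 * 10"
    using m by auto
  then show ?thesis
    unfolding Iset_def by blast
qed

theorem mainTheorem3:
  assumes "x0 \<in> Lset"
  shows "(\<forall>n. gmap differentiable (at ((gmap ^^ n) x0))) \<and>
         (\<lambda>n. (1 / real n) * (\<Sum>i=1..n. ln \<bar>deriv gmap ((gmap ^^ (i - 1)) x0)\<bar>))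
            \<longlonglongrightarrow> ln 10"
proof -
  have "(gmap ^^ n) x0 \<in> {0..<2 ^ 10}" for n
    using assms gmap_in_range unfolding Lset_def by (cases n) auto
  moreover have "(gmap ^^ n) x0 \<notin> Iset" for n
    using assms unfolding Lset_def by blast
  ultimately have deriv_10: "(gmap has_field_derivative 10) (at ((gmap ^^ n) x0))" for n
    by (meson gmap_has_derivative in_Iset_if_mult_10_in_Ints)
  have "\<forall>\<^sub>F n in sequentially.
      (1 / real n) * (\<Sum>i=1..n. ln \<bar>deriv gmap ((gmap ^^ (i - 1)) x0)\<bar>) = ln 10"
    using eventually_ge_at_top[of "1::nat"]
    by eventually_elim (simp add: DERIV_imp_deriv[OF deriv_10])
  then have "(\<lambda>n. (1 / real n) * (\<Sum>i=1..n. ln \<bar>deriv gmap ((gmap ^^ (i - 1)) x0)\<bar>))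
      \<longlonglongrightarrow> ln 10"
    by (rule tendsto_eventually)
  moreover have "gmap differentiable (at ((gmap ^^ n) x0))" for n
    using deriv_10 field_differentiable_imp_differentiable field_differentiable_def by blast
  ultimately show ?thesis
    by blast
qed

end
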